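(* Let $\Pi$ be a finite simply laced diagram with labelling $\sigma:I\to V$, $I=\{1,\dots,|V|\}$, and let $\mathcal A=\{G_{ij},\phi^i_{ij}\mid i\ne j\in I\}$ be a continuous $\mathrm{SO}(2)$-amalgam with respect to $\Pi$ and $\sigma$. Then $\mathcal A$ is isomorphic (as an $\mathrm{SO}(2)$-amalgam) to the standard $\mathrm{SO}(2)$-amalgam $\mathcal A(\Pi,\sigma,\mathrm{SO}(2))$.
   Context: A simply laced diagram is a finite graph $\Pi$ with vertex set $V$ (all edges simple); a labelling is a bijection $\sigma:I\to V$. $\varepsilon_{12},\varepsilon_{23}:\mathrm{SO}(2)\to\mathrm{SO}(3)$ embed a $2\times2$ rotation matrix as the upper-left, resp. lower-right, $2\times 2$ diagonal block; $\iota_1(x)=(x,1)$, $\iota_2(x)=(1,x)$ into $\mathrm{SO}(2)\times\mathrm{SO}(2)$. An $\mathrm{SO}(2)$-amalgam with respect to $\Pi$ and $\sigma$ is a family of groups $G_{ij}$ ($i\ne j\in I$, $G_{ij}=G_{ji}$) with monomorphisms $\phi^i_{ij}:\mathrm{SO}(2)\to G_{ij}$ such that $G_{ij}=\mathrm{SO}(3)$ if $\{i^\sigma,j^\sigma\}$ is an edge and $G_{ij}=\mathrm{SO}(2)\times\mathrm{SO}(2)$ otherwise, and for $i<j$ the images satisfy $\phi^i_{ij}(\mathrm{SO}(2))=\varepsilon_{12}(\mathrm{SO}(2))$, $\phi^j_{ij}(\mathrm{SO}(2))=\varepsilon_{23}(\mathrm{SO}(2))$ in the edge case and $\phi^i_{ij}(\mathrm{SO}(2))=\iota_1(\mathrm{SO}(2))$,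 $\phi^j_{ij}(\mathrm{SO}(2))=\iota_2(\mathrm{SO}(2))$ otherwise. It is continuous if all $\phi^i_{ij}$ are continuous (Lie group topologies). The standard one $\mathcal A(\Pi,\sigma,\mathrm{SO}(2))$ has, for $i<j$, $\phi^i_{ij}=\varepsilon_{12},\phi^j_{ij}=\varepsilon_{23}$ (edge) resp. $\phi^i_{ij}=\iota_1,\phi^j_{ij}=\iota_2$ (non-edge). An isomorphism of $\mathrm{SO}(2)$-amalgams $\{G_{ij},\phi^i_{ij}\}\to\{H_{ij},\psi^i_{ij}\}$ is a permutation $\pi$ of $I$ together with group isomorphisms $\alpha_{ij}:G_{ij}\to H_{\pi(i)\pi(j)}$ such that $\alpha_{ij}\circ\phi^i_{ij}=\psi^{\pi(i)}_{\pi(i)\pi(j)}$ for all $i\ne j$. *)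

theory Defs
  imports "HOL-Analysis.Analysis" "HOL-Algebra.Group"
begin

type_synonym m2 = "real^2^2"
type_synonym m3 = "real^3^3"
(* common carrier type: SO(3) lives in the left summand, SO(2) x SO(2) in the right *)
type_synonym amg = "m3 + (m2 \<times> m2)"

definition SO2 :: "m2 set" where
  "SO2 = {A. orthogonal_matrix A \<and> det A = 1}"

definition SO3 :: "m3 set" where
  "SO3 = {A. orthogonal_matrix A \<and> det A = 1}"

definition SO2_grp :: "m2 monoid" where
  "SO2_grp = \<lparr>carrier = SO2, mult = (\<lambda>A B. A ** B), one = mat 1\<rparr>"

definition SO3_grp :: "amg monoid" where
  "SO3_grp = \<lparr>carrier = Inl ` SO3, mult = (\<lambda>x y. Inl (projl x ** projl y)), one = Inl (mat 1)\<rparr>"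

definition T2_grp :: "amg monoid" where
  "T2_grp = \<lparr>carrier = Inr ` (SO2 \<times> SO2),
     mult = (\<lambda>x y. Inr (fst (projr x) ** fst (projr y), snd (projr x) ** snd (projr y))),
     one = Inr (mat 1, mat 1)\<rparr>"

(* upper-left 2x2 block embedding SO(2) -> SO(3) *)
definition eps12_mat :: "m2 \<Rightarrow> m3" where
  "eps12_mat A = (\<chi> i j. if i = 3 \<or> j = 3 then (if i = j then 1 else 0)
                      else A $ (if i = 1 then 1 else 2) $ (if j = 1 then 1 else 2))"

(* lower-right 2x2 block embedding SO(2) -> SO(3) *)
definition eps23_mat :: "m2 \<Rightarrow> m3" where
  "eps23_mat A = (\<chi> i j. if i = 1 \<or> j = 1 then (if i = j then 1 else 0)
                      else A $ (if i = 2 then 1 else 2) $ (if j = 2 then 1 else 2))"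

definition eps12 :: "m2 \<Rightarrow> amg" where "eps12 A = Inl (eps12_mat A)"
definition eps23 :: "m2 \<Rightarrow> amg" where "eps23 A = Inl (eps23_mat A)"
definition iota1 :: "m2 \<Rightarrow> amg" where "iota1 A = Inr (A, mat 1)"
definition iota2 :: "m2 \<Rightarrow> amg" where "iota2 A = Inr (mat 1, A)"

definition simple_diagram :: "'v set \<Rightarrow> ('v \<Rightarrow> 'v \<Rightarrow> bool) \<Rightarrow> bool" where
  "simple_diagram V E \<longleftrightarrow> finite V \<and>
     (\<forall>x y. E x y \<longrightarrow> x \<in> V \<and> y \<in> V \<and> x \<noteq> y \<and> E y x)"

definition index_set :: "'v set \<Rightarrow> nat set" where
  "index_set V = {1..card V}"

definition amal_grp :: "('v \<Rightarrow> 'v \<Rightarrow> bool) \<Rightarrow> (nat \<Rightarrow> 'v) \<Rightarrow> nat \<Rightarrow> nat \<Rightarrow> amg monoid" where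
  "amal_grp E \<sigma> i j = (if E (\<sigma> i) (\<sigma> j) then SO3_grp else T2_grp)"

(* An SO(2)-amalgam is encoded by phi, where phi i j = \<phi>^i_{ij} : SO(2) -> G_ij
   (so \<phi>^j_{ij} = phi j i). *)
definition SO2_amalgam ::
  "'v set \<Rightarrow> ('v \<Rightarrow> 'v \<Rightarrow> bool) \<Rightarrow> (nat \<Rightarrow> 'v) \<Rightarrow> (nat \<Rightarrow> nat \<Rightarrow> m2 \<Rightarrow> amg) \<Rightarrow> bool" where
  "SO2_amalgam V E \<sigma> phi \<longleftrightarrow>
     (\<forall>i\<in>index_set V. \<forall>j\<in>index_set V. i \<noteq> j \<longrightarrow>
        phi i j \<in> hom SO2_grp (amal_grp E \<sigma> i j) \<and> inj_on (phi i j) SO2) \<and>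
     (\<forall>i\<in>index_set V. \<forall>j\<in>index_set V. i < j \<longrightarrow>
        (if E (\<sigma> i) (\<sigma> j)
         then phi i j ` SO2 = eps12 ` SO2 \<and> phi j i ` SO2 = eps23 ` SO2
         else phi i j ` SO2 = iota1 ` SO2 \<and> phi j i ` SO2 = iota2 ` SO2))"

(* continuity w.r.t. the Lie group (= matrix subspace) topologies *)
definition continuous_amalgam ::
  "'v set \<Rightarrow> ('v \<Rightarrow> 'v \<Rightarrow> bool) \<Rightarrow> (nat \<Rightarrow> 'v) \<Rightarrow> (nat \<Rightarrow> nat \<Rightarrow> m2 \<Rightarrow> amg) \<Rightarrow> bool" where
  "continuous_amalgam V E \<sigma> phi \<longleftrightarrow>
     (\<forall>i\<in>index_set V. \<forall>j\<in>index_set V. i \<noteq> j \<longrightarrow>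
        (if E (\<sigma> i) (\<sigma> j) then continuous_on SO2 (projl \<circ> phi i j)
         else continuous_on SO2 (projr \<circ> phi i j)))"

definition standard_amalgam :: "('v \<Rightarrow> 'v \<Rightarrow> bool) \<Rightarrow> (nat \<Rightarrow> 'v) \<Rightarrow> nat \<Rightarrow> nat \<Rightarrow> m2 \<Rightarrow> amg" where
  "standard_amalgam E \<sigma> i j =
     (if i < j then (if E (\<sigma> i) (\<sigma> j) then eps12 else iota1)
      else (if E (\<sigma> i) (\<sigma> j) then eps23 else iota2))"

definition amalgam_isomorphic ::
  "'v set \<Rightarrow> ('v \<Rightarrow> 'v \<Rightarrow> bool) \<Rightarrow> (nat \<Rightarrow> 'v) \<Rightarrow> (nat \<Rightarrow> nat \<Rightarrow> m2 \<Rightarrow> amg)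
     \<Rightarrow> (nat \<Rightarrow> nat \<Rightarrow> m2 \<Rightarrow> amg) \<Rightarrow> bool" where
  "amalgam_isomorphic V E \<sigma> phi psi \<longleftrightarrow>
     (\<exists>\<pi> \<alpha>. bij_betw \<pi> (index_set V) (index_set V) \<and>
       (\<forall>i\<in>index_set V. \<forall>j\<in>index_set V. i \<noteq> j \<longrightarrow>
          \<alpha> i j \<in> iso (amal_grp E \<sigma> i j) (amal_grp E \<sigma> (\<pi> i) (\<pi> j)) \<and>
          (\<forall>x\<in>carrier (amal_grp E \<sigma> i j). \<alpha> i j x = \<alpha> j i x) \<and>
          (\<forall>x\<in>SO2. \<alpha> i j (phi i j x) = psi (\<pi> i) (\<pi> j) x)))"

end

theory Submission
  imports Defs
begin

(* Each \<phi>^i_ij is a continuous injective homomorphism from SO(2) onto the prescribed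
   subgroup of G_ij, so composing it with the inverse of the standard embedding yields a
   continuous automorphism of SO(2), i.e. of the circle group.  Lifting along t \<mapsto> cis t turns
   such an automorphism into a continuous additive map on \<real>, which is linear; hence it is
   z \<mapsto> z^n, and injectivity forces n = \<plusminus>1: the identity or inversion (transposition).
   Inversions are undone inside G_ij: in SO(2) \<times> SO(2) by transposing a factor, in SO(3) by
   conjugating with diag(-1,1,1) and diag(1,1,-1), which transpose the upper-left resp.
   lower-right 2\<times>2 block while preserving the other embedded SO(2).  So every pair
   \<phi>^i_ij, \<phi>^j_ij is normalised independently, and the identity permutation together with
   these automorphisms of the G_ij is an isomorphism onto the standard amalgam. *)

lemma continuous_additive_linear:
  fixes k :: "real \<Rightarrow> complex"
  assumes add: "\<And>s t. k (s + t) = k s + k t" and cont: "continuous_on UNIV k"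
  shows "k t = of_real t * k 1"
proof -
  have k0: "k 0 = 0" using add[of 0 0] by simp
  have nat: "k (of_nat n * t) = of_nat n * k t" for n t
    by (induction n) (simp_all add: k0 add distrib_right)
  have neg: "k (-t) = - k t" for t
    using add[of t "-t"] k0 by (simp add: eq_neg_iff_add_eq_0 add.commute)
  have int: "k (of_int m * t) = of_int m * k t" for m t
  proof (cases "m \<ge> 0")
    case True
    then have "m = int (nat m)" by simp
    then show ?thesis using nat[of "nat m" t] by (metis of_int_of_nat_eq)
  next
    case False
    then have m: "m = - int (nat (-m))" by simp
    have "k (of_int m * t) = k (- (of_nat (nat (-m)) * t))" by (subst m) simp
    also have "\<dots> = - (of_nat (nat (-m)) * k t)" by (simp add: neg nat)
    also have "\<dots> = of_int m * k t" by (subst (2) m) simp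
    finally show ?thesis .
  qed
  have rat: "k q = of_real q * k 1" if hq: "q \<in> \<rat>" for q
  proof -
    obtain a b where b: "b > 0" and q: "q = of_int a / of_int b" using Rats_cases'[OF hq] by metis
    have "of_int b * k q = k (of_int b * q)" by (simp add: int)
    also have "of_int b * q = of_int a * 1" using b by (simp add: q)
    also have "k (of_int a * 1) = of_int a * k 1" by (rule int)
    finally have "of_int b * k q = of_int a * k 1" .
    then have "k q = of_int a / of_int b * k 1" using b by (simp add: field_simps)
    then show ?thesis by (simp add: q)
  qed
  have cl: "closed {t. k t = of_real t * k 1}"
    by (intro closed_Collect_eq cont continuous_on_mult_right continuous_on_of_real continuous_on_id)
  have "\<rat> \<subseteq> {t. k t = of_real t * k 1}" using rat by blast
  then have "closure \<rat> \<subseteq> {t. k t = of_real t * k 1}" using cl by (rule closure_minimal)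
  then show ?thesis using Rats_closure_real by auto
qed

lemma continuous_exp_eq_1_constant:
  fixes h :: "'a::topological_space \<Rightarrow> complex"
  assumes "connected S" "continuous_on S h" "\<And>x. x \<in> S \<Longrightarrow> exp (h x) = 1"
  shows "h constant_on S"
proof -
  have "h x \<in> range (\<lambda>n::int. \<i> * of_real (of_int (2 * n) * pi))" if x: "x \<in> S" for x
  proof -
    obtain n :: int where "Re (h x) = 0" "Im (h x) = of_int (2 * n) * pi"
      using assms(3)[OF x] by (auto simp: exp_eq_1)
    then show ?thesis by (intro image_eqI[of _ _ n]) (simp_all add: complex_eq_iff)
  qed
  then have "h ` S \<subseteq> range (\<lambda>n::int. \<i> * of_real (of_int (2 * n) * pi))" by blast
  then have "countable (h ` S)" by (rule countable_subset) simp
  moreover have "connected (h ` S)" using assms(2,1) by (rule connected_continuous_image)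
  ultimately obtain a where "h ` S \<subseteq> {a}" using connected_card_eq_iff_nontrivial by blast
  then show ?thesis unfolding constant_on_def by blast
qed

lemma continuous_character_real:
  fixes c :: "real \<Rightarrow> complex"
  assumes cont: "continuous_on UNIV c" and mult: "\<And>s t. c (s + t) = c s * c t"
    and nz: "\<And>t. c t \<noteq> 0"
  obtains k where "\<And>t. c t = exp (of_real t * k)"
proof -
  obtain g where contg: "continuous_on UNIV g" and g: "\<And>t. c t = exp (g t)"
    by (rule continuous_logarithm_on_contractible[OF cont contractible_UNIV]) (auto simp: nz)
  have "c 0 = 1" using mult[of 0 0] nz[of 0] by simp
  then have eg0: "exp (g 0) = 1" by (simp add: g)
  define k where "k t = g t - g 0" for t
  have "k (s + t) = k s + k t" for s t
  proof -
    have "(\<lambda>t. g (s + t) - g s - g t) constant_on UNIV"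
      by (rule continuous_exp_eq_1_constant)
        (auto simp: exp_diff g[symmetric] mult nz intro!: continuous_intros
          continuous_on_compose2[OF contg])
    then have "g (s + t) - g s - g t = g (s + 0) - g s - g 0"
      unfolding constant_on_def by (metis UNIV_I)
    then show ?thesis by (simp add: k_def algebra_simps)
  qed
  moreover have "continuous_on UNIV k" unfolding k_def by (intro continuous_intros contg)
  ultimately have "k t = of_real t * k 1" for t by (rule continuous_additive_linear)
  then have "c t = exp (of_real t * k 1)" for t
    by (metis g k_def eg0 diff_add_cancel exp_add mult_1_right)
  then show ?thesis by (rule that)
qed

lemma circle_endomorphism_power:
  fixes F :: "complex \<Rightarrow> complex"
  assumes cont: "continuous_on (sphere 0 1) F"
    and into: "\<And>z. norm z = 1 \<Longrightarrow> norm (F z) = 1"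
    and mult: "\<And>z w. norm z = 1 \<Longrightarrow> norm w = 1 \<Longrightarrow> F (z * w) = F z * F w"
  obtains n :: int where "\<And>t. F (cis t) = cis (of_int n * t)"
proof -
  have "continuous_on UNIV (\<lambda>t. F (cis t))"
    by (rule continuous_on_compose2[OF cont]) (auto intro!: continuous_intros)
  moreover have "F (cis (s + t)) = F (cis s) * F (cis t)" for s t
    by (simp add: mult cis_mult[symmetric])
  moreover have "F (cis t) \<noteq> 0" for t using into[of "cis t"] by auto
  ultimately obtain k where k: "\<And>t. F (cis t) = exp (of_real t * k)"
    by (rule continuous_character_real) auto
  have "F 1 = 1"
    using mult[of 1 1] into[of 1] by (metis mult_cancel_right1 norm_one zero_neq_one norm_zero)
  then have "exp (of_real (2 * pi) * k) = 1" using k[of "2 * pi"] by simp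
  then obtain n :: int where "Re k = 0" "Im k = of_int n"
    by (auto simp: exp_eq_1)
  then have "k = \<i> * of_int n" by (simp add: complex_eq_iff)
  then show ?thesis using k by (intro that) (simp add: cis_conv_exp mult_ac)
qed

lemma circle_automorphism_cases:
  fixes F :: "complex \<Rightarrow> complex"
  assumes cont: "continuous_on (sphere 0 1) F"
    and into: "\<And>z. norm z = 1 \<Longrightarrow> norm (F z) = 1"
    and mult: "\<And>z w. norm z = 1 \<Longrightarrow> norm w = 1 \<Longrightarrow> F (z * w) = F z * F w"
    and inj: "inj_on F (sphere 0 1)"
  shows "(\<forall>z. norm z = 1 \<longrightarrow> F z = z) \<or> (\<forall>z. norm z = 1 \<longrightarrow> F z = cnj z)"
proof -
  obtain n :: int where n: "\<And>t. F (cis t) = cis (of_int n * t)"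
    using circle_endomorphism_power[OF cont into mult] by blast
  have n_unit: "n = 1 \<or> n = -1"
  proof (rule ccontr)
    assume n_ne: "\<not> (n = 1 \<or> n = -1)"
    define t where "t = (if n = 0 then pi else 2 * pi / of_int n)"
    have "F (cis t) = F (cis 0)" unfolding n by (simp add: t_def)
    then have "cis t = 1" using inj by (auto dest: inj_onD)
    then obtain m :: int where "t = of_int (2 * m) * pi"
      by (auto simp: cis_conv_exp exp_eq_1)
    then show False using n_ne
      by (cases "n = 0")
        (auto simp: t_def field_simps zmult_eq_1_iff simp flip: of_int_mult of_int_eq_1_iff)
  qed
  have z: "z = cis (Arg z)" if "norm z = 1" for z
    using that cis_Arg[of z] by (cases "z = 0") (auto simp: sgn_div_norm)
  from n_unit show ?thesis
  proof
    assume "n = 1"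
    then show ?thesis using n z by (metis mult_1 of_int_1)
  next
    assume "n = -1"
    then have "F z = cnj z" if "norm z = 1" for z
      using n[of "Arg z"] z[OF that] by (metis cis_cnj mult_minus1 of_int_1 of_int_minus)
    then show ?thesis by blast
  qed
qed

definition rot :: "complex \<Rightarrow> m2" where
  "rot z = (\<chi> i j. if i = j then Re z else if i = 1 then - Im z else Im z)"

definition rot_complex :: "m2 \<Rightarrow> complex" where
  "rot_complex A = Complex (A$1$1) (A$2$1)"

lemmas matrix_2_3_simps =
  matrix_matrix_mult_def mat_def transpose_def vec_eq_iff forall_2 forall_3 sum_2 sum_3

lemma rot_nth[simp]:
  "rot z $ 1 $ 1 = Re z" "rot z $ 1 $ 2 = - Im z" "rot z $ 2 $ 1 = Im z" "rot z $ 2 $ 2 = Re z"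
  by (simp_all add: rot_def)

lemma rot_mult: "rot (z * w) = rot z ** rot w"
  by (simp add: matrix_2_3_simps algebra_simps)

lemma rot_one: "rot 1 = mat 1"
  by (simp add: matrix_2_3_simps)

lemma transpose_rot: "transpose (rot z) = rot (cnj z)"
  by (simp add: matrix_2_3_simps)

lemma rot_complex_rot[simp]: "rot_complex (rot z) = z"
  by (simp add: rot_complex_def complex_eq_iff)

lemma rot_inj: "rot z = rot w \<Longrightarrow> z = w"
  by (metis rot_complex_rot)

lemma rot_SO2:
  assumes "norm z = 1"
  shows "rot z \<in> SO2"
proof -
  have "z * cnj z = 1" "cnj z * z = 1"
    using assms complex_norm_square[of z] by (simp_all add: mult.commute)
  then have "orthogonal_matrix (rot z)"
    unfolding orthogonal_matrix_def transpose_rot rot_mult[symmetric] by (simp add: rot_one)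
  moreover have "det (rot z) = 1"
  proof -
    have "(Re z)^2 + (Im z)^2 = 1" using assms cmod_power2[of z] by simp
    then show ?thesis by (simp add: det_2 power2_eq_square)
  qed
  ultimately show ?thesis by (simp add: SO2_def)
qed

lemma SO2_eq_rot:
  assumes "A \<in> SO2"
  shows "A = rot (rot_complex A)" "norm (rot_complex A) = 1"
proof -
  have T: "transpose A ** A = mat 1" and D: "det A = 1"
    using assms by (auto simp: SO2_def orthogonal_matrix_def)
  have Te: "(transpose A ** A) $ i $ j = mat 1 $ i $ j" for i j using T by simp
  define a where "a = A$1$1"
  define b where "b = A$1$2"
  define c where "c = A$2$1"
  define d where "d = A$2$2"
  have col_norm: "a*a + c*c = 1"
    using Te[of 1 1] by (simp add: matrix_2_3_simps a_def c_def)
  have col_orth: "a*b + c*d = 0"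
    using Te[of 1 2] by (simp add: matrix_2_3_simps a_def b_def c_def d_def)
  have det_one: "a*d - b*c = 1" using D by (simp add: det_2 a_def b_def c_def d_def)
  have "b + c = b*(a*a+c*c) + c*(a*d-b*c) - a*(a*b+c*d)" using col_norm col_orth det_one by simp
  also have "\<dots> = 0" by (simp add: algebra_simps)
  finally have bc: "b = - c" by simp
  have "d - a = d*(a*a+c*c) - a*(a*d-b*c) - c*(a*b+c*d)" using col_norm col_orth det_one by simp
  also have "\<dots> = 0" by (simp add: algebra_simps)
  finally have da: "d = a" by simp
  show "A = rot (rot_complex A)"
    using bc da by (simp add: vec_eq_iff forall_2 rot_complex_def a_def b_def c_def d_def)
  have "norm (rot_complex A) = sqrt (a*a + c*c)"
    by (simp add: rot_complex_def a_def c_def complex_norm power2_eq_square)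
  then show "norm (rot_complex A) = 1" using col_norm by simp
qed

lemma SO2_mult: "A \<in> SO2 \<Longrightarrow> B \<in> SO2 \<Longrightarrow> A ** B \<in> SO2"
  by (metis SO2_eq_rot rot_mult rot_SO2 norm_mult mult_1)

lemma SO2_comm: "A \<in> SO2 \<Longrightarrow> B \<in> SO2 \<Longrightarrow> A ** B = B ** A"
  by (metis SO2_eq_rot rot_mult mult.commute)

lemma SO2_transpose: "A \<in> SO2 \<Longrightarrow> transpose A \<in> SO2"
  by (metis SO2_eq_rot transpose_rot rot_SO2 complex_mod_cnj)

lemma SO2_transpose_mult:
  "A \<in> SO2 \<Longrightarrow> B \<in> SO2 \<Longrightarrow> transpose (A ** B) = transpose A ** transpose B"
  by (simp add: matrix_transpose_mul SO2_comm SO2_transpose)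

lemma continuous_on_rot: "continuous_on S rot"
proof -
  have "continuous_on S (\<lambda>z. if i = j then Re z else if i = 1 then - Im z else Im z)" for i j :: 2
    by (cases "i = j"; cases "i = 1") (simp_all add: continuous_intros)
  then show ?thesis unfolding rot_def by (intro continuous_on_vec_lambda)
qed

lemma continuous_on_rot_complex: "continuous_on S rot_complex"
  unfolding rot_complex_def by (intro continuous_intros continuous_on_id)

lemma SO2_continuous_automorphism_cases:
  assumes cont: "continuous_on SO2 f" and into: "\<And>x. x \<in> SO2 \<Longrightarrow> f x \<in> SO2"
    and hom: "\<And>x y. x \<in> SO2 \<Longrightarrow> y \<in> SO2 \<Longrightarrow> f (x ** y) = f x ** f y"
    and inj: "inj_on f SO2"
  shows "(\<forall>x\<in>SO2. f x = x) \<or> (\<forall>x\<in>SO2. f x = transpose x)"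
proof -
  define F where "F z = rot_complex (f (rot z))" for z
  have rs: "rot z \<in> SO2" if "z \<in> sphere 0 1" for z using that rot_SO2 by simp
  have contF: "continuous_on (sphere 0 1) F"
  proof -
    have "continuous_on (sphere 0 1) (\<lambda>z. f (rot z))"
      by (rule continuous_on_compose2[OF cont continuous_on_rot]) (auto simp: rs)
    then show ?thesis
      unfolding F_def by (rule continuous_on_compose2[OF continuous_on_rot_complex]) auto
  qed
  have fr: "f (rot z) = rot (F z)" if "norm z = 1" for z
    unfolding F_def using SO2_eq_rot(1)[OF into[OF rot_SO2[OF that]]] .
  have intoF: "norm (F z) = 1" if "norm z = 1" for z
    unfolding F_def using SO2_eq_rot(2)[OF into[OF rot_SO2[OF that]]] .
  have multF: "F (z * w) = F z * F w" if "norm z = 1" "norm w = 1" for z w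
  proof -
    have "F (z * w) = rot_complex (f (rot z ** rot w))" by (simp add: F_def rot_mult)
    also have "\<dots> = rot_complex (f (rot z) ** f (rot w))" using hom rot_SO2 that by simp
    also have "\<dots> = rot_complex (rot (F z * F w))" using fr that by (simp add: rot_mult)
    finally show ?thesis by simp
  qed
  have injF: "inj_on F (sphere 0 1)"
  proof (rule inj_onI)
    fix z w assume z: "z \<in> sphere 0 1" and w: "w \<in> sphere 0 1" and e: "F z = F w"
    then have "f (rot z) = f (rot w)" using fr by simp
    then have "rot z = rot w" using inj rs z w by (auto dest: inj_onD)
    then show "z = w" by (rule rot_inj)
  qed
  have f_rot: "f x = rot (F (rot_complex x))" if "x \<in> SO2" for x
    using fr[OF SO2_eq_rot(2)[OF that]] SO2_eq_rot(1)[OF that] by metis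
  have "(\<forall>z. norm z = 1 \<longrightarrow> F z = z) \<or> (\<forall>z. norm z = 1 \<longrightarrow> F z = cnj z)"
    by (rule circle_automorphism_cases[OF contF intoF multF injF])
  then show ?thesis
  proof
    assume "\<forall>z. norm z = 1 \<longrightarrow> F z = z"
    then show ?thesis using f_rot SO2_eq_rot by metis
  next
    assume "\<forall>z. norm z = 1 \<longrightarrow> F z = cnj z"
    then show ?thesis using f_rot SO2_eq_rot transpose_rot by metis
  qed
qed

definition transpose_if :: "bool \<Rightarrow> m2 \<Rightarrow> m2" where
  "transpose_if b A = (if b then transpose A else A)"

lemma transpose_if_SO2: "A \<in> SO2 \<Longrightarrow> transpose_if b A \<in> SO2"
  by (simp add: transpose_if_def SO2_transpose)

lemma transpose_if_mult:
  "A \<in> SO2 \<Longrightarrow> B \<in> SO2 \<Longrightarrow> transpose_if b (A ** B) = transpose_if b A ** transpose_if b B"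
  by (simp add: transpose_if_def SO2_transpose_mult)

lemma transpose_if_transpose_if[simp]: "transpose_if b (transpose_if b A) = A"
  by (simp add: transpose_if_def)

(* proj reads off the matrix part of G and retract inverts emb on it, so that
   retract \<circ> proj \<circ> phi is a continuous automorphism of SO(2). *)
lemma SO2_hom_onto_embedding_cases:
  fixes phi emb :: "m2 \<Rightarrow> amg" and proj :: "amg \<Rightarrow> 'b::topological_space"
    and retract :: "'b \<Rightarrow> m2"
  assumes hom: "phi \<in> hom SO2_grp G" and inj: "inj_on phi SO2" and img: "phi ` SO2 = emb ` SO2"
    and cont: "continuous_on SO2 (proj \<circ> phi)" and cont_retract: "continuous_on UNIV retract"
    and retract: "\<And>y. y \<in> SO2 \<Longrightarrow> retract (proj (emb y)) = y"
    and emb_mult: "\<And>y z. y \<in> SO2 \<Longrightarrow> z \<in> SO2 \<Longrightarrow> emb (y ** z) = emb y \<otimes>\<^bsub>G\<^esub> emb z"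
  shows "\<exists>b. \<forall>x\<in>SO2. phi x = emb (transpose_if b x)"
proof -
  define f where "f = retract \<circ> (proj \<circ> phi)"
  have f: "f x \<in> SO2 \<and> phi x = emb (f x)" if "x \<in> SO2" for x
  proof -
    have "phi x \<in> emb ` SO2" using img that by blast
    then obtain y where y: "y \<in> SO2" "phi x = emb y" by blast
    then have "f x = y" using retract by (simp add: f_def)
    then show ?thesis using y by simp
  qed
  have f_mult: "f (x ** y) = f x ** f y" if "x \<in> SO2" "y \<in> SO2" for x y
  proof -
    have "phi (x ** y) = phi x \<otimes>\<^bsub>G\<^esub> phi y"
      using hom_mult[OF hom, of x y] that by (simp add: SO2_grp_def)
    also have "\<dots> = emb (f x ** f y)" using f that emb_mult by simp
    finally have "f (x ** y) = retract (proj (emb (f x ** f y)))" by (simp add: f_def)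
    also have "\<dots> = f x ** f y" using retract SO2_mult f that by simp
    finally show ?thesis .
  qed
  have f_inj: "inj_on f SO2"
  proof (rule inj_onI)
    fix x y assume "x \<in> SO2" "y \<in> SO2" "f x = f y"
    then show "x = y" using f inj by (metis inj_onD)
  qed
  have f_cont: "continuous_on SO2 f"
    unfolding f_def
    by (rule continuous_on_compose[OF cont continuous_on_subset[OF cont_retract]]) auto
  have "(\<forall>x\<in>SO2. f x = x) \<or> (\<forall>x\<in>SO2. f x = transpose x)"
    using f by (intro SO2_continuous_automorphism_cases[OF f_cont _ f_mult f_inj]) blast
  then show ?thesis
  proof
    assume "\<forall>x\<in>SO2. f x = x"
    then show ?thesis using f by (intro exI[of _ False]) (auto simp: transpose_if_def)
  next
    assume "\<forall>x\<in>SO2. f x = transpose x"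
    then show ?thesis using f by (intro exI[of _ True]) (auto simp: transpose_if_def)
  qed
qed

definition upper_block :: "m3 \<Rightarrow> m2" where
  "upper_block M = (\<chi> a b. M $ (if a = 1 then 1 else 2) $ (if b = 1 then 1 else 2))"

definition lower_block :: "m3 \<Rightarrow> m2" where
  "lower_block M = (\<chi> a b. M $ (if a = 1 then 2 else 3) $ (if b = 1 then 2 else 3))"

lemma upper_block_eps12_mat: "upper_block (eps12_mat A) = A"
  by (simp add: vec_eq_iff forall_2 upper_block_def eps12_mat_def)

lemma lower_block_eps23_mat: "lower_block (eps23_mat A) = A"
  by (simp add: vec_eq_iff forall_2 lower_block_def eps23_mat_def)

lemma continuous_on_upper_block: "continuous_on UNIV upper_block"
  unfolding upper_block_def
  by (intro continuous_on_vec_lambda continuous_on_component continuous_on_id)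

lemma continuous_on_lower_block: "continuous_on UNIV lower_block"
  unfolding lower_block_def
  by (intro continuous_on_vec_lambda continuous_on_component continuous_on_id)

lemma eps12_mat_mult: "eps12_mat (A ** B) = eps12_mat A ** eps12_mat B"
  by (simp add: matrix_2_3_simps eps12_mat_def)

lemma eps23_mat_mult: "eps23_mat (A ** B) = eps23_mat A ** eps23_mat B"
  by (simp add: matrix_2_3_simps eps23_mat_def)

definition torus_flip :: "bool \<Rightarrow> bool \<Rightarrow> amg \<Rightarrow> amg" where
  "torus_flip b1 b2 v = Inr (transpose_if b1 (fst (projr v)), transpose_if b2 (snd (projr v)))"

lemma torus_flip_iso: "torus_flip b1 b2 \<in> iso T2_grp T2_grp"
proof -
  have car: "torus_flip b1 b2 v \<in> Inr ` (SO2 \<times> SO2)" if "v \<in> Inr ` (SO2 \<times> SO2)" for v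
    using that by (auto simp: torus_flip_def transpose_if_SO2)
  have inv: "torus_flip b1 b2 (torus_flip b1 b2 v) = v" if "v \<in> Inr ` (SO2 \<times> SO2)" for v
    using that by (auto simp: torus_flip_def)
  have hom: "torus_flip b1 b2 \<in> hom T2_grp T2_grp"
    unfolding hom_def using car by (auto simp: T2_grp_def torus_flip_def transpose_if_mult)
  have "bij_betw (torus_flip b1 b2) (Inr ` (SO2 \<times> SO2)) (Inr ` (SO2 \<times> SO2))"
    by (rule bij_betwI[where g = "torus_flip b1 b2"]) (use car inv in auto)
  then show ?thesis using hom by (simp add: iso_def T2_grp_def)
qed

definition diag_sign :: "bool \<Rightarrow> bool \<Rightarrow> 3 \<Rightarrow> real" where
  "diag_sign b1 b2 i =
     (if i = 1 then (if b1 then -1 else 1) else if i = 3 then (if b2 then -1 else 1) else 1)"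

definition sign_diag :: "bool \<Rightarrow> bool \<Rightarrow> m3" where
  "sign_diag b1 b2 = (\<chi> i j. if i = j then diag_sign b1 b2 i else 0)"

definition sign_conj :: "bool \<Rightarrow> bool \<Rightarrow> m3 \<Rightarrow> m3" where
  "sign_conj b1 b2 M = sign_diag b1 b2 ** M ** sign_diag b1 b2"

lemma sign_diag_square: "sign_diag b1 b2 ** sign_diag b1 b2 = mat 1"
  by (simp add: matrix_2_3_simps sign_diag_def diag_sign_def)

lemma transpose_sign_diag: "transpose (sign_diag b1 b2) = sign_diag b1 b2"
  by (simp add: matrix_2_3_simps sign_diag_def)

lemma sign_conj_mult: "sign_conj b1 b2 (M ** N) = sign_conj b1 b2 M ** sign_conj b1 b2 N"
proof -
  let ?D = "sign_diag b1 b2"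
  have "?D ** (M ** N) ** ?D = ?D ** M ** (?D ** ?D) ** N ** ?D"
    by (simp add: sign_diag_square matrix_mul_assoc)
  then show ?thesis by (simp add: sign_conj_def matrix_mul_assoc)
qed

lemma sign_conj_sign_conj[simp]: "sign_conj b1 b2 (sign_conj b1 b2 M) = M"
  by (simp add: sign_conj_def matrix_mul_assoc sign_diag_square)
    (simp add: matrix_mul_assoc[symmetric] sign_diag_square)

lemma sign_conj_SO3:
  assumes "M \<in> SO3"
  shows "sign_conj b1 b2 M \<in> SO3"
proof -
  have "orthogonal_matrix (sign_diag b1 b2)"
    by (simp add: orthogonal_matrix_def transpose_sign_diag sign_diag_square)
  then have "orthogonal_matrix (sign_conj b1 b2 M)"
    using assms unfolding sign_conj_def SO3_def by (auto intro: orthogonal_matrix_mul)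
  moreover have "det (sign_diag b1 b2) * det (sign_diag b1 b2) = 1"
    by (metis sign_diag_square det_I det_mul)
  then have "det (sign_conj b1 b2 M) = 1"
    using assms by (simp add: sign_conj_def SO3_def det_mul mult_ac)
  ultimately show ?thesis by (simp add: SO3_def)
qed

lemma sign_conj_nth:
  "\<forall>i j. sign_conj b1 b2 M $ i $ j = diag_sign b1 b2 i * diag_sign b1 b2 j * M $ i $ j"
  unfolding forall_3 by (simp add: sign_conj_def matrix_2_3_simps sign_diag_def diag_sign_def)

lemma sign_conj_eps12_mat:
  assumes "A \<in> SO2"
  shows "sign_conj b1 b2 (eps12_mat A) = eps12_mat (transpose_if b1 A)"
proof -
  obtain z where A: "A = rot z" using SO2_eq_rot(1)[OF assms] by blast
  show ?thesis unfolding A using sign_conj_nth[of b1 b2 "eps12_mat (rot z)"]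
    by (simp add: vec_eq_iff forall_3 eps12_mat_def diag_sign_def transpose_if_def transpose_rot)
qed

lemma sign_conj_eps23_mat:
  assumes "A \<in> SO2"
  shows "sign_conj b1 b2 (eps23_mat A) = eps23_mat (transpose_if b2 A)"
proof -
  obtain z where A: "A = rot z" using SO2_eq_rot(1)[OF assms] by blast
  show ?thesis unfolding A using sign_conj_nth[of b1 b2 "eps23_mat (rot z)"]
    by (simp add: vec_eq_iff forall_3 eps23_mat_def diag_sign_def transpose_if_def transpose_rot)
qed

definition SO3_flip :: "bool \<Rightarrow> bool \<Rightarrow> amg \<Rightarrow> amg" where
  "SO3_flip b1 b2 v = Inl (sign_conj b1 b2 (projl v))"

lemma SO3_flip_iso: "SO3_flip b1 b2 \<in> iso SO3_grp SO3_grp"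
proof -
  have car: "SO3_flip b1 b2 v \<in> Inl ` SO3" if "v \<in> Inl ` SO3" for v
    using that by (auto simp: SO3_flip_def sign_conj_SO3)
  have inv: "SO3_flip b1 b2 (SO3_flip b1 b2 v) = v" if "v \<in> Inl ` SO3" for v
    using that by (auto simp: SO3_flip_def)
  have hom: "SO3_flip b1 b2 \<in> hom SO3_grp SO3_grp"
    unfolding hom_def using car by (auto simp: SO3_grp_def SO3_flip_def sign_conj_mult)
  have "bij_betw (SO3_flip b1 b2) (Inl ` SO3) (Inl ` SO3)"
    by (rule bij_betwI[where g = "SO3_flip b1 b2"]) (use car inv in auto)
  then show ?thesis using hom by (simp add: iso_def SO3_grp_def)
qed

lemma SO3_pair_normal_form:
  assumes phi1: "phi1 \<in> hom SO2_grp SO3_grp" "inj_on phi1 SO2" "phi1 ` SO2 = eps12 ` SO2"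
      "continuous_on SO2 (projl \<circ> phi1)"
    and phi2: "phi2 \<in> hom SO2_grp SO3_grp" "inj_on phi2 SO2" "phi2 ` SO2 = eps23 ` SO2"
      "continuous_on SO2 (projl \<circ> phi2)"
  shows "\<exists>A. A \<in> iso SO3_grp SO3_grp
           \<and> (\<forall>x\<in>SO2. A (phi1 x) = eps12 x) \<and> (\<forall>x\<in>SO2. A (phi2 x) = eps23 x)"
proof -
  obtain b1 where b1: "\<forall>x\<in>SO2. phi1 x = eps12 (transpose_if b1 x)"
    using SO2_hom_onto_embedding_cases[OF phi1 continuous_on_upper_block]
    by (auto simp: eps12_def upper_block_eps12_mat SO3_grp_def eps12_mat_mult)
  obtain b2 where b2: "\<forall>x\<in>SO2. phi2 x = eps23 (transpose_if b2 x)"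
    using SO2_hom_onto_embedding_cases[OF phi2 continuous_on_lower_block]
    by (auto simp: eps23_def lower_block_eps23_mat SO3_grp_def eps23_mat_mult)
  have "\<forall>x\<in>SO2. SO3_flip b1 b2 (phi1 x) = eps12 x" "\<forall>x\<in>SO2. SO3_flip b1 b2 (phi2 x) = eps23 x"
    using b1 b2 sign_conj_eps12_mat sign_conj_eps23_mat transpose_if_SO2
    by (simp_all add: SO3_flip_def eps12_def eps23_def)
  with SO3_flip_iso show ?thesis by blast
qed

lemma torus_pair_normal_form:
  assumes phi1: "phi1 \<in> hom SO2_grp T2_grp" "inj_on phi1 SO2" "phi1 ` SO2 = iota1 ` SO2"
      "continuous_on SO2 (projr \<circ> phi1)"
    and phi2: "phi2 \<in> hom SO2_grp T2_grp" "inj_on phi2 SO2" "phi2 ` SO2 = iota2 ` SO2"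
      "continuous_on SO2 (projr \<circ> phi2)"
  shows "\<exists>A. A \<in> iso T2_grp T2_grp
           \<and> (\<forall>x\<in>SO2. A (phi1 x) = iota1 x) \<and> (\<forall>x\<in>SO2. A (phi2 x) = iota2 x)"
proof -
  obtain b1 where b1: "\<forall>x\<in>SO2. phi1 x = iota1 (transpose_if b1 x)"
    using SO2_hom_onto_embedding_cases[OF phi1 continuous_on_fst[OF continuous_on_id]]
    by (auto simp: iota1_def T2_grp_def)
  obtain b2 where b2: "\<forall>x\<in>SO2. phi2 x = iota2 (transpose_if b2 x)"
    using SO2_hom_onto_embedding_cases[OF phi2 continuous_on_snd[OF continuous_on_id]]
    by (auto simp: iota2_def T2_grp_def)
  have "\<forall>x\<in>SO2. torus_flip b1 b2 (phi1 x) = iota1 x" "\<forall>x\<in>SO2. torus_flip b1 b2 (phi2 x) = iota2 x"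
    using b1 b2 by (auto simp: torus_flip_def iota1_def iota2_def transpose_if_def)
  with torus_flip_iso show ?thesis by blast
qed

lemma amalgam_pair_normal_form:
  assumes E_sym: "\<And>x y. E x y \<Longrightarrow> E y x"
    and amalgam: "SO2_amalgam V E \<sigma> phi" and cont: "continuous_amalgam V E \<sigma> phi"
    and p: "p \<in> index_set V" and q: "q \<in> index_set V" and pq: "p < q"
  shows "\<exists>A. A \<in> iso (amal_grp E \<sigma> p q) (amal_grp E \<sigma> p q)
           \<and> (\<forall>x\<in>SO2. A (phi p q x) = standard_amalgam E \<sigma> p q x)
           \<and> (\<forall>x\<in>SO2. A (phi q p x) = standard_amalgam E \<sigma> q p x)"
proof -
  have hom: "phi i j \<in> hom SO2_grp (amal_grp E \<sigma> i j) \<and> inj_on (phi i j) SO2"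
    and cont_ij: "if E (\<sigma> i) (\<sigma> j) then continuous_on SO2 (projl \<circ> phi i j)
                  else continuous_on SO2 (projr \<circ> phi i j)"
    if "i \<in> index_set V" "j \<in> index_set V" "i \<noteq> j" for i j
    using amalgam cont that unfolding SO2_amalgam_def continuous_amalgam_def by blast+
  have img: "if E (\<sigma> p) (\<sigma> q)
      then phi p q ` SO2 = eps12 ` SO2 \<and> phi q p ` SO2 = eps23 ` SO2
      else phi p q ` SO2 = iota1 ` SO2 \<and> phi q p ` SO2 = iota2 ` SO2"
    using amalgam p q pq unfolding SO2_amalgam_def by blast
  note facts = hom[OF p q] hom[OF q p] cont_ij[OF p q] cont_ij[OF q p] img pq
  show ?thesis
  proof (cases "E (\<sigma> p) (\<sigma> q)")
    case True
    with E_sym have E_qp: "E (\<sigma> q) (\<sigma> p)" by blast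
    with True facts have "\<exists>A. A \<in> iso SO3_grp SO3_grp
        \<and> (\<forall>x\<in>SO2. A (phi p q x) = eps12 x) \<and> (\<forall>x\<in>SO2. A (phi q p x) = eps23 x)"
      by (intro SO3_pair_normal_form) (auto simp: amal_grp_def)
    with True E_qp pq show ?thesis by (simp add: amal_grp_def standard_amalgam_def)
  next
    case False
    with E_sym have E_qp: "\<not> E (\<sigma> q) (\<sigma> p)" by blast
    with False facts have "\<exists>A. A \<in> iso T2_grp T2_grp
        \<and> (\<forall>x\<in>SO2. A (phi p q x) = iota1 x) \<and> (\<forall>x\<in>SO2. A (phi q p x) = iota2 x)"
      by (intro torus_pair_normal_form) (auto simp: amal_grp_def)
    with False E_qp pq show ?thesis by (simp add: amal_grp_def standard_amalgam_def)
  qed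
qed

lemma amalgam_isomorphic_by_pairs:
  assumes E_sym: "\<And>x y. E x y \<Longrightarrow> E y x"
    and pairs: "\<And>p q. p \<in> index_set V \<Longrightarrow> q \<in> index_set V \<Longrightarrow> p < q \<Longrightarrow>
      \<exists>A. A \<in> iso (amal_grp E \<sigma> p q) (amal_grp E \<sigma> p q)
        \<and> (\<forall>x\<in>SO2. A (phi p q x) = psi p q x) \<and> (\<forall>x\<in>SO2. A (phi q p x) = psi q p x)"
  shows "amalgam_isomorphic V E \<sigma> phi psi"
proof -
  obtain A where A: "\<And>p q. p \<in> index_set V \<Longrightarrow> q \<in> index_set V \<Longrightarrow> p < q \<Longrightarrow>
      A p q \<in> iso (amal_grp E \<sigma> p q) (amal_grp E \<sigma> p q)
        \<and> (\<forall>x\<in>SO2. A p q (phi p q x) = psi p q x) \<and> (\<forall>x\<in>SO2. A p q (phi q p x) = psi q p x)"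
    using pairs by metis
  define \<alpha> where "\<alpha> i j = (if i < j then A i j else A j i)" for i j
  have G_sym: "amal_grp E \<sigma> i j = amal_grp E \<sigma> j i" for i j
    using E_sym by (auto simp: amal_grp_def)
  have "\<alpha> i j \<in> iso (amal_grp E \<sigma> i j) (amal_grp E \<sigma> i j)
      \<and> (\<forall>x\<in>carrier (amal_grp E \<sigma> i j). \<alpha> i j x = \<alpha> j i x)
      \<and> (\<forall>x\<in>SO2. \<alpha> i j (phi i j x) = psi i j x)"
    if "i \<in> index_set V" "j \<in> index_set V" "i \<noteq> j" for i j
    using that A[of i j] A[of j i] G_sym[of i j] by (cases "i < j") (auto simp: \<alpha>_def)
  then show ?thesis unfolding amalgam_isomorphic_def
    by (intro exI[of _ "\<lambda>i. i"] exI[of _ \<alpha>] conjI) (simp add: bij_betw_def, blast)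
qed

theorem mainTheorem4:
  fixes V :: "'v set" and E :: "'v \<Rightarrow> 'v \<Rightarrow> bool" and \<sigma> :: "nat \<Rightarrow> 'v"
    and phi :: "nat \<Rightarrow> nat \<Rightarrow> m2 \<Rightarrow> amg"
  assumes "simple_diagram V E"
    and "bij_betw \<sigma> (index_set V) V"
    and "SO2_amalgam V E \<sigma> phi"
    and "continuous_amalgam V E \<sigma> phi"
  shows "amalgam_isomorphic V E \<sigma> phi (standard_amalgam E \<sigma>)"
proof -
  have E_sym: "\<And>x y. E x y \<Longrightarrow> E y x" using assms(1) by (auto simp: simple_diagram_def)
  show ?thesis
    by (rule amalgam_isomorphic_by_pairs[OF E_sym amalgam_pair_normal_form[OF E_sym assms(3,4)]])
qed

end
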